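(* Let $\mathbf{X},\mathbf{Y}$ be Banach spaces, $\mathcal{S}\subset\mathbf{X}$, $\mathcal{S}'\subset\mathbf{Y}$, and let $\Phi:\mathcal{S}\to\mathcal{S}'$ be measurable and expansive, i.e., there is $\kappa>0$ with $\|\Phi(\mathbf{x})-\Phi(\mathbf{x}')\|_{\mathbf{Y}}\ge\kappa\|\mathbf{x}-\mathbf{x}'\|_{\mathbf{X}}$ for all $\mathbf{x},\mathbf{x}'\in\mathcal{S}$. If $s_0\ge0$ and $\mathbb{P}$ is a Borel probability measure on $\mathcal{S}$ of growth order $s_0$ (w.r.t. $\mathbf{X}$), then $\mathbb{P}\circ\Phi^{-1}$ is a Borel probability measure on $\mathcal{S}'$ of growth order $s_0$ (w.r.t. $\mathbf{Y}$).
   Context: Subsets of Banach spaces carry the trace of the Borel $\sigma$-algebra of the ambient space (this defines measurability of $\Phi$ and Borel measures on subsets). A Borel probability measure $\mathbb{P}$ on $\mathcal{S}\subset\mathbf{X}$ has (logarithmic) growth order $s_0\in[0,\infty)$ w.r.t. $\mathbf{X}$ if for every $s>s_0$ there are $\varepsilon_0,c>0$ with $\mathbb{P}(\mathcal{S}\cap\mathcal{B}(\mathbf{x},\varepsilon;\mathbf{X}))\le2^{-c\varepsilon^{-1/s}}$ for all $\mathbf{x}\in\mathbf{X}$ and $\varepsilon\in(0,\varepsilon_0)$, where $\mathcal{B}(\mathbf{x},\varepsilon;\mathbf{X})$ is the closed ball. *)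

theory Defs
  imports "HOL-Probability.Probability"
begin

definition borel_prob_on :: "'a::banach measure \<Rightarrow> 'a set \<Rightarrow> bool" where
  "borel_prob_on M S \<longleftrightarrow> prob_space M \<and> space M = S \<and> sets M = sets (restrict_space borel S)"

definition growth_order :: "'a::banach measure \<Rightarrow> 'a set \<Rightarrow> real \<Rightarrow> bool" where
  "growth_order M S s0 \<longleftrightarrow>
     (\<forall>s>s0. \<exists>\<epsilon>0>0. \<exists>c>0. \<forall>x. \<forall>\<epsilon>. 0 < \<epsilon> \<and> \<epsilon> < \<epsilon>0 \<longrightarrow>
        measure M (S \<inter> cball x \<epsilon>) \<le> 2 powr (- c * \<epsilon> powr (- 1 / s)))"

end

theory Submission
  imports Defs
begin

text \<open>An expansive map pulls a closed ball of radius \<open>\<epsilon>\<close> back into a closed ball of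
  radius \<open>2\<epsilon>/\<kappa>\<close> around any point of the preimage, so the push-forward measure of a
  small ball is dominated by the measure of a ball of proportional radius. Rescaling
  the radius by a constant only changes the constant \<open>c\<close> in the growth bound.\<close>

lemma borel_prob_on_distr:
  assumes "borel_prob_on P S"
    and "\<Phi> \<in> measurable (restrict_space borel S) (restrict_space borel S')"
  shows "borel_prob_on (distr P (restrict_space borel S') \<Phi>) S'"
proof -
  have "sets P = sets (restrict_space borel S)" and "prob_space P"
    using assms(1) unfolding borel_prob_on_def by auto
  then have "\<Phi> \<in> measurable P (restrict_space borel S')"
    using assms(2) measurable_cong_sets by blast
  then show ?thesis
    unfolding borel_prob_on_def
    by (simp add: \<open>prob_space P\<close> prob_space.prob_space_distr space_restrict_space)
qed

lemma expansive_vimage_cball_subset: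
  fixes \<Phi> :: "'a::real_normed_vector \<Rightarrow> 'b::real_normed_vector"
  assumes "\<kappa> > 0"
    and expansive: "\<forall>x\<in>S. \<forall>x'\<in>S. norm (\<Phi> x - \<Phi> x') \<ge> \<kappa> * norm (x - x')"
    and "x0 \<in> S" "\<Phi> x0 \<in> cball y \<epsilon>"
  shows "S \<inter> \<Phi> -` cball y \<epsilon> \<subseteq> cball x0 (2 / \<kappa> * \<epsilon>)"
proof
  fix x assume x: "x \<in> S \<inter> \<Phi> -` cball y \<epsilon>"
  have "\<kappa> * norm (x - x0) \<le> norm (\<Phi> x - \<Phi> x0)"
    using expansive x \<open>x0 \<in> S\<close> by auto
  also have "\<dots> \<le> dist (\<Phi> x) y + dist y (\<Phi> x0)"
    unfolding dist_norm using norm_triangle_ineq[of "\<Phi> x - y" "y - \<Phi> x0"] by simp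
  also have "\<dots> \<le> 2 * \<epsilon>"
    using x \<open>\<Phi> x0 \<in> cball y \<epsilon>\<close> by (auto simp: dist_commute)
  finally show "x \<in> cball x0 (2 / \<kappa> * \<epsilon>)"
    using \<open>\<kappa> > 0\<close> by (simp add: dist_norm norm_minus_commute field_simps)
qed

lemma measure_distr_cball_le_expansive:
  fixes \<Phi> :: "'a::banach \<Rightarrow> 'b::banach"
  assumes "borel_prob_on P S"
    and meas: "\<Phi> \<in> measurable (restrict_space borel S) (restrict_space borel S')"
    and "\<kappa> > 0"
    and "\<forall>x\<in>S. \<forall>x'\<in>S. norm (\<Phi> x - \<Phi> x') \<ge> \<kappa> * norm (x - x')"
  shows "\<exists>x. measure (distr P (restrict_space borel S') \<Phi>) (S' \<inter> cball y \<epsilon>)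
              \<le> measure P (S \<inter> cball x (2 / \<kappa> * \<epsilon>))"
proof -
  interpret prob_space P
    using assms(1) unfolding borel_prob_on_def by simp
  have space: "space P = S" and sets: "sets P = sets (restrict_space borel S)"
    using assms(1) unfolding borel_prob_on_def by auto
  have meas_P: "\<Phi> \<in> measurable P (restrict_space borel S')"
    using meas sets measurable_cong_sets by blast
  have "\<Phi> -` (S' \<inter> cball y \<epsilon>) \<inter> space P = S \<inter> \<Phi> -` cball y \<epsilon>"
    using measurable_space[OF meas_P] by (auto simp: space space_restrict_space)
  moreover have "S' \<inter> cball y \<epsilon> \<in> sets (restrict_space borel S')"
    unfolding sets_restrict_space by auto
  ultimately have distr_eq: "measure (distr P (restrict_space borel S') \<Phi>) (S' \<inter> cball y \<epsilon>)
      = measure P (S \<inter> \<Phi> -` cball y \<epsilon>)"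
    using meas_P by (simp add: measure_distr)
  show ?thesis
  proof (cases "S \<inter> \<Phi> -` cball y \<epsilon> = {}")
    case True
    then show ?thesis by (simp add: distr_eq)
  next
    case False
    then obtain x0 where x0: "x0 \<in> S" "\<Phi> x0 \<in> cball y \<epsilon>" by blast
    have "measure P (S \<inter> \<Phi> -` cball y \<epsilon>) \<le> measure P (S \<inter> cball x0 (2 / \<kappa> * \<epsilon>))"
      using expansive_vimage_cball_subset[OF assms(3,4) x0]
      by (intro finite_measure_mono) (auto simp: sets sets_restrict_space)
    then show ?thesis by (auto simp: distr_eq)
  qed
qed

lemma growth_order_if_cball_dominated:
  fixes P :: "'a::banach measure" and Q :: "'b::banach measure"
  assumes growth: "growth_order P S s0" and "a > 0"
    and dominated: "\<And>y \<epsilon>. \<exists>x. measure Q (S' \<inter> cball y \<epsilon>) \<le> measure P (S \<inter> cball x (a * \<epsilon>))"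
  shows "growth_order Q S' s0"
  unfolding growth_order_def
proof (intro allI impI)
  fix s assume "s > s0"
  with growth obtain \<epsilon>0 c where "\<epsilon>0 > 0" "c > 0" and bound:
    "\<And>x \<epsilon>. 0 < \<epsilon> \<Longrightarrow> \<epsilon> < \<epsilon>0 \<Longrightarrow> measure P (S \<inter> cball x \<epsilon>) \<le> 2 powr (- c * \<epsilon> powr (- 1 / s))"
    unfolding growth_order_def by blast
  define c' where "c' = c * a powr (- 1 / s)"
  have "\<forall>y \<epsilon>. 0 < \<epsilon> \<and> \<epsilon> < \<epsilon>0 / a \<longrightarrow>
      measure Q (S' \<inter> cball y \<epsilon>) \<le> 2 powr (- c' * \<epsilon> powr (- 1 / s))"
  proof (intro allI impI)
    fix y \<epsilon> assume \<epsilon>: "0 < \<epsilon> \<and> \<epsilon> < \<epsilon>0 / a"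
    obtain x where "measure Q (S' \<inter> cball y \<epsilon>) \<le> measure P (S \<inter> cball x (a * \<epsilon>))"
      using dominated by blast
    also have "\<dots> \<le> 2 powr (- c * (a * \<epsilon>) powr (- 1 / s))"
      using \<epsilon> \<open>a > 0\<close> by (intro bound) (auto simp: field_simps)
    also have "\<dots> = 2 powr (- c' * \<epsilon> powr (- 1 / s))"
      using \<epsilon> \<open>a > 0\<close> by (simp add: c'_def powr_mult mult.assoc)
    finally show "measure Q (S' \<inter> cball y \<epsilon>) \<le> 2 powr (- c' * \<epsilon> powr (- 1 / s))" .
  qed
  moreover have "\<epsilon>0 / a > 0" "c' > 0"
    using \<open>\<epsilon>0 > 0\<close> \<open>c > 0\<close> \<open>a > 0\<close> by (auto simp: c'_def)
  ultimately show "\<exists>\<epsilon>0>0. \<exists>c>0. \<forall>y \<epsilon>. 0 < \<epsilon> \<and> \<epsilon> < \<epsilon>0 \<longrightarrow>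
      measure Q (S' \<inter> cball y \<epsilon>) \<le> 2 powr (- c * \<epsilon> powr (- 1 / s))"
    by blast
qed

theorem lemmaA1:
  fixes S :: "'a::banach set" and S' :: "'b::banach set"
    and \<Phi> :: "'a \<Rightarrow> 'b" and P :: "'a measure" and \<kappa> s0 :: real
  assumes meas: "\<Phi> \<in> measurable (restrict_space borel S) (restrict_space borel S')"
    and kappa: "\<kappa> > 0"
    and expansive: "\<forall>x\<in>S. \<forall>x'\<in>S. norm (\<Phi> x - \<Phi> x') \<ge> \<kappa> * norm (x - x')"
    and s0: "s0 \<ge> 0"
    and P: "borel_prob_on P S"
    and growth: "growth_order P S s0"
  shows "borel_prob_on (distr P (restrict_space borel S') \<Phi>) S'
       \<and> growth_order (distr P (restrict_space borel S') \<Phi>) S' s0"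
proof
  show "borel_prob_on (distr P (restrict_space borel S') \<Phi>) S'"
    using P meas by (rule borel_prob_on_distr)
  show "growth_order (distr P (restrict_space borel S') \<Phi>) S' s0"
  proof (rule growth_order_if_cball_dominated[OF growth])
    show "2 / \<kappa> > 0" using kappa by simp
    show "\<exists>x. measure (distr P (restrict_space borel S') \<Phi>) (S' \<inter> cball y \<epsilon>)
              \<le> measure P (S \<inter> cball x (2 / \<kappa> * \<epsilon>))" for y \<epsilon>
      using P meas kappa expansive by (rule measure_distr_cball_le_expansive)
  qed
qed

end
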